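(* Let $\varphi=\frac{1+\sqrt5}{2}$, $F_n=\frac{\varphi^n-(-1/\varphi)^n}{\varphi+1/\varphi}$, $F_0!=1$, $F_n!=F_1\cdots F_n$. Define $$e_F^x=\sum_{n=0}^\infty\frac{x^n}{F_n!},\qquad E_F^x=\sum_{n=0}^\infty(-1)^{\frac{n(n-1)}2}\frac{x^n}{F_n!}.$$ Then both series define entire functions of $x$, and for every constant $k$ and every $x\ne0$, $$D_Fe_F^{kx}=k\,e_F^{kx},\qquad D_FE_F^{kx}=k\,E_F^{-kx},$$ where $D_Ff(x)=\frac{f(\varphi x)-f(-x/\varphi)}{(\varphi+\frac1\varphi)x}$.
   Context: $D_F$ is the Golden derivative; $e_F^{kx}$ means $e_F^{y}$ evaluated at $y=kx$, and similarly for $E_F$. *)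

theory Defs
  imports "HOL-Analysis.Analysis"
begin

definition golden :: real where
  "golden = (1 + sqrt 5) / 2"

definition fibF :: "nat \<Rightarrow> real" where
  "fibF n = (golden ^ n - (- 1 / golden) ^ n) / (golden + 1 / golden)"

definition fibfact :: "nat \<Rightarrow> real" where
  "fibfact n = (\<Prod>i=1..n. fibF i)"

definition eF :: "complex \<Rightarrow> complex" where
  "eF x = (\<Sum>n. x ^ n / complex_of_real (fibfact n))"

definition EF :: "complex \<Rightarrow> complex" where
  "EF x = (\<Sum>n. (-1) ^ (n * (n - 1) div 2) * x ^ n / complex_of_real (fibfact n))"

definition DF :: "(complex \<Rightarrow> complex) \<Rightarrow> complex \<Rightarrow> complex" where
  "DF f x = (f (complex_of_real golden * x) - f (- x / complex_of_real golden))
            / (complex_of_real (golden + 1 / golden) * x)"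

end

theory Submission
  imports Defs
begin

text \<open>By Binet's formula the golden difference quotient of \<open>y ^ n\<close> is \<open>F\<^sub>n y ^ (n - 1)\<close>,
  so \<open>D\<^sub>F\<close> acts on power series like the ordinary derivative with \<open>n\<close> replaced by \<open>F\<^sub>n\<close>.
  Dividing the coefficients by \<open>F\<^sub>n!\<close> therefore makes \<open>D\<^sub>F\<close> a shift of coefficients:
  \<open>e\<^sub>F\<close> is fixed, and the sign \<open>(-1) ^ (n(n-1)/2)\<close> picks up a factor \<open>(-1) ^ n\<close> under the
  shift, which turns \<open>E\<^sub>F y\<close> into \<open>E\<^sub>F (-y)\<close>. Convergence everywhere comes from \<open>F\<^sub>n \<ge> n/2\<close>.\<close>

lemma golden_pos: "golden > 0"
  unfolding golden_def by (simp add: add_pos_nonneg)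

lemma golden_square: "golden\<^sup>2 = golden + 1"
  unfolding golden_def by (simp add: power2_eq_square field_simps)

lemma golden_plus_inverse_pos: "golden + 1 / golden > 0"
  using golden_pos by (simp add: add_pos_pos)

lemma golden_conjugate_square: "(- 1 / golden)\<^sup>2 = - 1 / golden + 1"
proof -
  have "golden * (golden - 1) = 1"
    using golden_square by (simp add: power2_eq_square algebra_simps)
  then have conjugate: "- 1 / golden = 1 - golden"
    using golden_pos by (simp add: field_simps)
  show ?thesis
    unfolding conjugate
    using golden_square by (simp add: power2_eq_square algebra_simps)
qed

lemma power_Suc_Suc_if_square_eq:
  fixes x :: "'a::comm_ring_1"
  assumes "x\<^sup>2 = x + 1"
  shows "x ^ Suc (Suc n) = x ^ Suc n + x ^ n"
proof -
  have "x ^ Suc (Suc n) = x ^ n * x\<^sup>2"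
    by (simp add: power2_eq_square algebra_simps)
  then show ?thesis
    using assms by (simp add: algebra_simps)
qed

lemma fibF_0: "fibF 0 = 0"
  by (simp add: fibF_def)

lemma fibF_Suc_0: "fibF (Suc 0) = 1"
  using golden_plus_inverse_pos by (simp add: fibF_def)

lemma fibF_Suc_Suc: "fibF (Suc (Suc n)) = fibF (Suc n) + fibF n"
  unfolding fibF_def
  using power_Suc_Suc_if_square_eq[OF golden_square, of n]
    power_Suc_Suc_if_square_eq[OF golden_conjugate_square, of n]
  by (simp add: diff_divide_distrib add_divide_distrib)

lemma fibF_Suc_ge: "real (Suc n) / 2 \<le> fibF (Suc n)"
proof -
  have "real (Suc n) / 2 \<le> fibF (Suc n) \<and> real (Suc (Suc n)) / 2 \<le> fibF (Suc (Suc n))"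
    by (induction n) (simp_all add: fibF_0 fibF_Suc_0 fibF_Suc_Suc)
  then show ?thesis ..
qed

lemma fibF_Suc_pos: "fibF (Suc n) > 0"
  using fibF_Suc_ge[of n] by (simp add: less_le_trans[of 0 "real (Suc n) / 2"])

lemma fibfact_0: "fibfact 0 = 1"
  by (simp add: fibfact_def)

lemma fibfact_Suc: "fibfact (Suc n) = fibfact n * fibF (Suc n)"
  unfolding fibfact_def by (simp add: prod.nat_ivl_Suc')

lemma fibfact_pos: "fibfact n > 0"
  by (induction n) (simp_all add: fibfact_0 fibfact_Suc fibF_Suc_pos)

lemma summable_power_div_fibfact:
  assumes "r \<ge> 0"
  shows "summable (\<lambda>n. r ^ n / fibfact n)"
proof (rule summable_ratio_test[where c = "1/2" and N = "nat \<lceil>4 * r\<rceil>"])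
  fix n
  assume "nat \<lceil>4 * r\<rceil> \<le> n"
  then have "4 * r \<le> real n"
    by (metis of_nat_mono real_nat_ceiling_ge order_trans)
  then have "2 * r \<le> fibF (Suc n)"
    using fibF_Suc_ge[of n] by simp
  then have "r * (r ^ n / fibfact n) \<le> fibF (Suc n) / 2 * (r ^ n / fibfact n)"
    using assms fibfact_pos[of n] by (intro mult_right_mono) auto
  then show "norm (r ^ Suc n / fibfact (Suc n)) \<le> 1/2 * norm (r ^ n / fibfact n)"
    using assms fibfact_pos[of n] fibF_Suc_pos[of n] by (simp add: fibfact_Suc field_simps)
qed simp

lemma summable_bounded_coeff_div_fibfact:
  fixes x :: complex
  assumes "\<And>n. norm (a n) \<le> 1"
  shows "summable (\<lambda>n. a n * x ^ n / of_real (fibfact n))"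
proof (rule summable_comparison_test)
  show "summable (\<lambda>n. norm x ^ n / fibfact n)"
    by (simp add: summable_power_div_fibfact)
  show "\<exists>N. \<forall>n\<ge>N. norm (a n * x ^ n / of_real (fibfact n)) \<le> norm x ^ n / fibfact n"
  proof (intro exI[of _ 0] allI impI)
    fix n
    have "norm (a n) * norm x ^ n \<le> norm x ^ n"
      using assms by (simp add: mult_left_le_one_le)
    then show "norm (a n * x ^ n / of_real (fibfact n)) \<le> norm x ^ n / fibfact n"
      using fibfact_pos[of n] by (simp add: norm_mult norm_divide norm_power divide_right_mono)
  qed
qed

lemma DF_scale: "DF (\<lambda>y. f (k * y)) x = k * DF f (k * x)"
  by (cases "k = 0") (simp_all add: DF_def mult.left_commute)

lemma DF_scale_eq:
  assumes "\<And>y. y \<noteq> 0 \<Longrightarrow> DF f y = g y" and "x \<noteq> 0"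
  shows "DF (\<lambda>y. f (k * y)) x = k * g (k * x)"
  using assms by (cases "k = 0") (simp_all add: DF_scale DF_def)

lemma golden_plus_inverse_mult_fibF: "(golden + 1 / golden) * fibF n = golden ^ n - (- 1 / golden) ^ n"
  using golden_plus_inverse_pos by (simp add: fibF_def)

lemma golden_difference_power:
  fixes y :: complex
  shows "(of_real golden * y) ^ n - (- y / of_real golden) ^ n
    = of_real ((golden + 1 / golden) * fibF n) * y ^ n"
proof -
  have "- y / of_real golden = of_real (- 1 / golden) * y"
    by simp
  then show ?thesis
    unfolding golden_plus_inverse_mult_fibF
    by (simp only: power_mult_distrib of_real_diff of_real_power left_diff_distrib)
qed

lemma DF_power_series_sums:
  fixes c :: "nat \<Rightarrow> complex"
  assumes summable: "\<And>y. summable (\<lambda>n. c n * y ^ n)" and "y \<noteq> 0"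
  shows "(\<lambda>n. c (Suc n) * of_real (fibF (Suc n)) * y ^ n) sums DF (\<lambda>y. \<Sum>n. c n * y ^ n) y"
proof -
  define s where "s = complex_of_real (golden + 1 / golden)"
  let ?S = "\<lambda>y. \<Sum>n. c n * y ^ n"
  let ?f = "\<lambda>n. s * (c n * of_real (fibF n) * y ^ n)"
  have "(\<lambda>n. c n * (of_real golden * y) ^ n - c n * (- y / of_real golden) ^ n)
      sums (?S (of_real golden * y) - ?S (- y / of_real golden))"
    by (intro sums_diff summable_sums summable)
  moreover have "c n * (of_real golden * y) ^ n - c n * (- y / of_real golden) ^ n = ?f n" for n
    unfolding s_def right_diff_distrib[symmetric] golden_difference_power by simp
  ultimately have "?f sums (?S (of_real golden * y) - ?S (- y / of_real golden))"
    by simp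
  then have "(\<lambda>n. ?f (Suc n)) sums (?S (of_real golden * y) - ?S (- y / of_real golden))"
    using sums_Suc_iff[of ?f] by (simp add: fibF_0)
  then have "(\<lambda>n. ?f (Suc n) / (s * y))
      sums ((?S (of_real golden * y) - ?S (- y / of_real golden)) / (s * y))"
    by (rule sums_divide)
  moreover have "s \<noteq> 0"
    unfolding s_def of_real_eq_0_iff using golden_plus_inverse_pos by linarith
  ultimately show ?thesis
    using \<open>y \<noteq> 0\<close> by (simp add: DF_def s_def mult.assoc)
qed

lemma holomorphic_fibonorial_series:
  assumes "\<And>n. norm (a n) \<le> 1"
  shows "(\<lambda>y. \<Sum>n. a n * y ^ n / of_real (fibfact n)) holomorphic_on UNIV"
  using termdiffs_strong_converges_everywhere[of "\<lambda>n. a n / of_real (fibfact n)"]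
    summable_bounded_coeff_div_fibfact[OF assms]
  by (auto simp: holomorphic_on_def field_differentiable_def)

lemma DF_fibonorial_series:
  assumes "\<And>n. norm (a n) \<le> 1" and "y \<noteq> 0"
  shows "DF (\<lambda>y. \<Sum>n. a n * y ^ n / of_real (fibfact n)) y
    = (\<Sum>n. a (Suc n) * y ^ n / of_real (fibfact n))"
proof -
  have "(\<lambda>n. a (Suc n) / of_real (fibfact (Suc n)) * of_real (fibF (Suc n)) * y ^ n)
      sums DF (\<lambda>y. \<Sum>n. a n / of_real (fibfact n) * y ^ n) y"
    using summable_bounded_coeff_div_fibfact[OF assms(1)] \<open>y \<noteq> 0\<close>
    by (intro DF_power_series_sums) simp
  moreover have "a (Suc n) / of_real (fibfact (Suc n)) * of_real (fibF (Suc n)) * y ^ n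
      = a (Suc n) * y ^ n / of_real (fibfact n)" for n
    using fibF_Suc_pos[of n] by (simp add: fibfact_Suc)
  ultimately show ?thesis
    by (simp add: sums_iff)
qed

lemma minus_one_power_triangular_Suc:
  "(- 1 :: 'a::ring_1) ^ (Suc n * (Suc n - 1) div 2) = (- 1) ^ (n * (n - 1) div 2) * (- 1) ^ n"
proof -
  have "Suc n * (Suc n - 1) = n * (n - 1) + 2 * n"
    by (cases n) (simp_all add: algebra_simps)
  then have "Suc n * (Suc n - 1) div 2 = n * (n - 1) div 2 + n"
    by simp
  then show ?thesis
    by (simp only: power_add)
qed

lemma eF_holomorphic: "eF holomorphic_on UNIV"
  using holomorphic_fibonorial_series[of "\<lambda>_. 1"] by (simp add: eF_def [abs_def])

lemma EF_holomorphic: "EF holomorphic_on UNIV"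
  using holomorphic_fibonorial_series[of "\<lambda>n. (-1) ^ (n * (n - 1) div 2)"]
  by (simp add: EF_def [abs_def] norm_power)

lemma DF_eF: "y \<noteq> 0 \<Longrightarrow> DF eF y = eF y"
  using DF_fibonorial_series[of "\<lambda>_. 1"] by (simp add: eF_def [abs_def])

lemma DF_EF:
  assumes "y \<noteq> 0"
  shows "DF EF y = EF (- y)"
proof -
  have "DF EF y = (\<Sum>n. (-1) ^ (Suc n * (Suc n - 1) div 2) * y ^ n / of_real (fibfact n))"
    using DF_fibonorial_series[of "\<lambda>n. (-1) ^ (n * (n - 1) div 2)", OF _ assms]
    by (simp add: EF_def [abs_def] norm_power)
  also have "\<dots> = EF (- y)"
    unfolding EF_def minus_one_power_triangular_Suc by (simp add: power_minus' mult.assoc)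
  finally show ?thesis .
qed

theorem mainTheorem8:
  shows "(\<forall>x. summable (\<lambda>n. x ^ n / complex_of_real (fibfact n)))
       \<and> (\<forall>x. summable (\<lambda>n. (-1) ^ (n * (n - 1) div 2) * x ^ n / complex_of_real (fibfact n)))
       \<and> eF holomorphic_on UNIV \<and> EF holomorphic_on UNIV
       \<and> (\<forall>k x. x \<noteq> 0 \<longrightarrow>
            DF (\<lambda>y. eF (k * y)) x = k * eF (k * x)
          \<and> DF (\<lambda>y. EF (k * y)) x = k * EF (- k * x))"
proof -
  have "summable (\<lambda>n. x ^ n / complex_of_real (fibfact n))" for x
    using summable_bounded_coeff_div_fibfact[of "\<lambda>_. 1" x] by simp
  moreover have "summable (\<lambda>n. (-1) ^ (n * (n - 1) div 2) * x ^ n / complex_of_real (fibfact n))"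
    for x :: complex
    by (rule summable_bounded_coeff_div_fibfact) (simp add: norm_power)
  moreover have "DF (\<lambda>y. eF (k * y)) x = k * eF (k * x)" if "x \<noteq> 0" for k x
    using DF_scale_eq[OF DF_eF that] .
  moreover have "DF (\<lambda>y. EF (k * y)) x = k * EF (- k * x)" if "x \<noteq> 0" for k x
    using DF_scale_eq[OF DF_EF that] by simp
  ultimately show ?thesis
    using eF_holomorphic EF_holomorphic by blast
qed

end
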